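(* Let $R$ be a commutative ring of Krull dimension $0$ which is integral over an Artinian subring $R_0$, and write $\mathcal{F}=\mathcal{F}(R_0,R)=\{R_\alpha\}$. Then for every $\alpha$, the ring $\mathcal{F}\llbracket X_1,\ldots,X_n\rrbracket$ is integral over its subring $R_\alpha\llbracket X_1,\ldots,X_n\rrbracket$.
   Context: All rings are commutative with identity, and subrings share the identity. For a $0$-dimensional ring $R$ and an Artinian subring $R_0\subseteq R$ such that $R$ is integral over $R_0$, let $\mathcal{F}(R_0,R)=\{R_\alpha\}$ denote the family of all subrings of $R$ that are finitely generated as $R_0$-algebras; this family is directed, each $R_\alpha$ is Artinian, and $R=\bigcup_\alpha R_\alpha$. The ring of Artinian power series $\mathcal{F}\llbracket X_1,\ldots,X_n\rrbracket$ is the set of all $f\in R\llbracket X_1,\ldots,X_n\rrbracket$ such that all coefficients of $f$ lie in a single $R_\alpha\in\mathcal{F}$; equivalently, $\mathcal{F}\llbracket X_1,\ldots,X_n\rrbracket=\bigcup_\alpha R_\alpha\llbracket X_1,\ldots,X_n\rrbracket$, which is a subring of $R\llbracket X_1,\ldots,X_n\rrbracket$. *)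

theory Defs
  imports "HOL-Algebra.Algebra"
begin

text \<open>Krull dimension 0: there is a prime ideal (so the ring is nonzero)
  and every prime ideal is maximal.\<close>
definition krull_dim_zero :: "('a, 'b) ring_scheme \<Rightarrow> bool" where
  "krull_dim_zero R \<longleftrightarrow>
     (\<exists>P. primeideal P R) \<and> (\<forall>P. primeideal P R \<longrightarrow> maximalideal P R)"

definition artinian_ring :: "('a, 'b) ring_scheme \<Rightarrow> bool" where
  "artinian_ring A \<longleftrightarrow> ring A \<and>
     (\<forall>I :: nat \<Rightarrow> 'a set. (\<forall>k. ideal (I k) A \<and> I (Suc k) \<subseteq> I k) \<longrightarrow>
        (\<exists>N. \<forall>k\<ge>N. I k = I N))"

definition integral_over :: "('a, 'b) ring_scheme \<Rightarrow> 'a set \<Rightarrow> 'a \<Rightarrow> bool" where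
  "integral_over R S x \<longleftrightarrow>
     (\<exists>k::nat. \<exists>c :: nat \<Rightarrow> 'a. k \<ge> 1 \<and> (\<forall>i<k. c i \<in> S) \<and>
        x [^]\<^bsub>R\<^esub> k \<oplus>\<^bsub>R\<^esub> (\<Oplus>\<^bsub>R\<^esub>i\<in>{..<k}. c i \<otimes>\<^bsub>R\<^esub> x [^]\<^bsub>R\<^esub> i) = \<zero>\<^bsub>R\<^esub>)"

definition fg_family :: "('a, 'b) ring_scheme \<Rightarrow> 'a set \<Rightarrow> 'a set set" where
  "fg_family R R0 = {generate_ring R (R0 \<union> A) | A. finite A \<and> A \<subseteq> carrier R}"

text \<open>A power series is a function from exponent vectors ('n \<Rightarrow> nat) to
  coefficients.  The variables X_1,...,X_n are indexed by the finite type 'n.\<close>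

definition ps_carrier :: "'a set \<Rightarrow> (('n::finite \<Rightarrow> nat) \<Rightarrow> 'a) set" where
  "ps_carrier S = {f. \<forall>m. f m \<in> S}"

definition ps_ring :: "('a, 'b) ring_scheme \<Rightarrow> (('n::finite \<Rightarrow> nat) \<Rightarrow> 'a) ring" where
  "ps_ring R =
    \<lparr> carrier = ps_carrier (carrier R),
      monoid.mult = (\<lambda>f g m. \<Oplus>\<^bsub>R\<^esub>p\<in>{(a, b). \<forall>i. a i + b i = m i}. f (fst p) \<otimes>\<^bsub>R\<^esub> g (snd p)),
      one = (\<lambda>m. if m = (\<lambda>i. 0) then \<one>\<^bsub>R\<^esub> else \<zero>\<^bsub>R\<^esub>),
      ring.zero = (\<lambda>m. \<zero>\<^bsub>R\<^esub>),
      add = (\<lambda>f g m. f m \<oplus>\<^bsub>R\<^esub> g m) \<rparr>"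

text \<open>The ring of Artinian power series F[[X]] = union of R_alpha[[X]].\<close>
definition artinian_ps :: "('a, 'b) ring_scheme \<Rightarrow> 'a set \<Rightarrow> (('n::finite \<Rightarrow> nat) \<Rightarrow> 'a) set" where
  "artinian_ps R R0 = (\<Union>S\<in>fg_family R R0. ps_carrier S)"

end

theory Submission
  imports Defs
begin

text \<open>Every coefficient of \<open>f\<close> lies in some \<open>R\<^sub>0[B]\<close> with \<open>B\<close> finite.  As \<open>R\<close> is
  integral over \<open>R\<^sub>0 \<subseteq> R\<^sub>\<alpha>\<close>, the ring \<open>T = R\<^sub>\<alpha>[B]\<close> is spanned as an
  \<open>R\<^sub>\<alpha>\<close>-module by a finite set \<open>E \<subseteq> T\<close>.  Working coefficientwise, multiplication by \<open>f\<close>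
  maps each constant series \<open>e \<in> E\<close> to an \<open>R\<^sub>\<alpha>\<lbrakk>X\<rbrakk>\<close>-combination of these constants,
  and \<open>1\<close> is such a combination too, so the determinant trick makes \<open>f\<close> integral over
  \<open>R\<^sub>\<alpha>\<lbrakk>X\<rbrakk>\<close>.  The determinant trick is carried out by fraction-free Gaussian
  elimination, keeping track of the fact that the pivots are monic polynomials in \<open>f\<close>.\<close>

section \<open>The power series ring\<close>

definition antidiag :: "('n::finite \<Rightarrow> nat) \<Rightarrow> (('n \<Rightarrow> nat) \<times> ('n \<Rightarrow> nat)) set" where
  "antidiag m = {(a, b). \<forall>i. a i + b i = m i}"

definition antidiag3 ::
    "('n::finite \<Rightarrow> nat) \<Rightarrow> (('n \<Rightarrow> nat) \<times> ('n \<Rightarrow> nat) \<times> ('n \<Rightarrow> nat)) set" where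
  "antidiag3 m = {(a, b, c). \<forall>i. a i + b i + c i = m i}"

lemma finite_antidiag: "finite (antidiag m)"
proof -
  have "antidiag m \<subseteq> Pi\<^sub>E UNIV (\<lambda>i. {..m i}) \<times> Pi\<^sub>E UNIV (\<lambda>i. {..m i})"
    by (auto simp: antidiag_def) (metis le_add1, metis le_add2)
  then show ?thesis
    by (rule finite_subset) (simp add: finite_PiE)
qed

definition ps_const :: "('a, 'b) ring_scheme \<Rightarrow> 'a \<Rightarrow> ('n::finite \<Rightarrow> nat) \<Rightarrow> 'a" where
  "ps_const R c = (\<lambda>m. if m = (\<lambda>i. 0) then c else \<zero>\<^bsub>R\<^esub>)"

lemma ps_ring_simps:
  "carrier (ps_ring R) = ps_carrier (carrier R)"
  "f \<otimes>\<^bsub>ps_ring R\<^esub> g = (\<lambda>m. \<Oplus>\<^bsub>R\<^esub>p\<in>antidiag m. f (fst p) \<otimes>\<^bsub>R\<^esub> g (snd p))"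
  "\<one>\<^bsub>ps_ring R\<^esub> = ps_const R \<one>\<^bsub>R\<^esub>"
  "\<zero>\<^bsub>ps_ring R\<^esub> = (\<lambda>m. \<zero>\<^bsub>R\<^esub>)"
  "f \<oplus>\<^bsub>ps_ring R\<^esub> g = (\<lambda>m. f m \<oplus>\<^bsub>R\<^esub> g m)"
  by (simp_all add: ps_ring_def antidiag_def ps_const_def)

lemma ps_carrier_iff: "f \<in> ps_carrier S \<longleftrightarrow> (\<forall>m. f m \<in> S)"
  by (simp add: ps_carrier_def)

lemma ps_const_in_ps_carrier: "c \<in> S \<Longrightarrow> \<zero>\<^bsub>R\<^esub> \<in> S \<Longrightarrow> ps_const R c \<in> ps_carrier S"
  by (simp add: ps_const_def ps_carrier_iff)

lemma (in ring) finsum_Sigma: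
  assumes "finite A" "\<And>x. x \<in> A \<Longrightarrow> finite (B x)"
    "\<And>x y. x \<in> A \<Longrightarrow> y \<in> B x \<Longrightarrow> F x y \<in> carrier R"
  shows "(\<Oplus>x\<in>A. \<Oplus>y\<in>B x. F x y) = (\<Oplus>p\<in>Sigma A B. F (fst p) (snd p))"
  using assms
proof (induction A rule: finite_induct)
  case empty then show ?case by simp
next
  case (insert a A)
  have eq: "Sigma (insert a A) B = Pair a ` B a \<union> Sigma A B" by auto
  have "(\<Oplus>p\<in>Sigma (insert a A) B. F (fst p) (snd p)) =
        (\<Oplus>p\<in>Pair a ` B a. F (fst p) (snd p)) \<oplus> (\<Oplus>p\<in>Sigma A B. F (fst p) (snd p))"
    unfolding eq by (rule finsum_Un_disjoint) (use insert in auto)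
  also have "(\<Oplus>p\<in>Pair a ` B a. F (fst p) (snd p)) = (\<Oplus>y\<in>B a. F a y)"
    by (subst finsum_reindex) (use insert in \<open>auto simp: inj_on_def\<close>)
  finally show ?case using insert by (simp add: Pi_def)
qed

lemma (in ring) finsum_in_subring:
  assumes "subring S R" "finite I" "\<And>i. i \<in> I \<Longrightarrow> g i \<in> S"
  shows "finsum R g I \<in> S"
  using assms(2,3)
proof (induction I rule: finite_induct)
  case empty then show ?case using subringE(2)[OF assms(1)] by simp
next
  case (insert i I)
  then have "finsum R g (insert i I) = g i \<oplus> finsum R g I"
    using subringE(1)[OF assms(1)] by (intro finsum_insert) auto
  then show ?case using insert subringE(7)[OF assms(1)] by simp
qed

context cring
begin

lemma finsum_antidiag_left:
  assumes "\<And>a b c. F a b c \<in> carrier R"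
  shows "(\<Oplus>p\<in>antidiag m. \<Oplus>q\<in>antidiag (fst p). F (fst q) (snd q) (snd p)) =
    (\<Oplus>t\<in>antidiag3 m. F (fst t) (fst (snd t)) (snd (snd t)))"
proof -
  let ?S = "Sigma (antidiag m) (\<lambda>p. antidiag (fst p))"
  let ?h = "\<lambda>x. (fst (snd x), snd (snd x), snd (fst x))"
  have "inj_on ?h ?S"
    by (rule inj_onI) (auto simp: antidiag_def fun_eq_iff prod_eq_iff)
  moreover have "?h ` ?S = antidiag3 m"
  proof (intro equalityI subsetI)
    fix t assume "t \<in> antidiag3 m"
    then obtain a b c where "t = (a, b, c)" "\<forall>i. a i + b i + c i = m i"
      by (auto simp: antidiag3_def)
    then show "t \<in> ?h ` ?S"
      by (intro image_eqI[where x = "((\<lambda>i. a i + b i, c), (a, b))"]) (auto simp: antidiag_def)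
  qed (auto simp: antidiag_def antidiag3_def)
  ultimately have "(\<Oplus>t\<in>antidiag3 m. F (fst t) (fst (snd t)) (snd (snd t))) =
      (\<Oplus>x\<in>?S. F (fst (?h x)) (fst (snd (?h x))) (snd (snd (?h x))))"
    using finsum_reindex[of "\<lambda>t. F (fst t) (fst (snd t)) (snd (snd t))" ?h ?S] assms by simp
  then show ?thesis
    using assms by (simp add: finsum_Sigma finite_antidiag)
qed

lemma finsum_antidiag_right:
  assumes "\<And>a b c. F a b c \<in> carrier R"
  shows "(\<Oplus>p\<in>antidiag m. \<Oplus>q\<in>antidiag (snd p). F (fst p) (fst q) (snd q)) =
    (\<Oplus>t\<in>antidiag3 m. F (fst t) (fst (snd t)) (snd (snd t)))"
proof -
  let ?S = "Sigma (antidiag m) (\<lambda>p. antidiag (snd p))"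
  let ?h = "\<lambda>x. (fst (fst x), fst (snd x), snd (snd x))"
  have "inj_on ?h ?S"
    by (rule inj_onI) (auto simp: antidiag_def fun_eq_iff prod_eq_iff)
  moreover have "?h ` ?S = antidiag3 m"
  proof (intro equalityI subsetI)
    fix t assume "t \<in> antidiag3 m"
    then obtain a b c where "t = (a, b, c)" "\<forall>i. a i + b i + c i = m i"
      by (auto simp: antidiag3_def)
    then show "t \<in> ?h ` ?S"
      by (intro image_eqI[where x = "((a, \<lambda>i. b i + c i), (b, c))"])
        (auto simp: antidiag_def add.assoc)
  qed (auto simp: antidiag_def antidiag3_def add.assoc)
  ultimately have "(\<Oplus>t\<in>antidiag3 m. F (fst t) (fst (snd t)) (snd (snd t))) =
      (\<Oplus>x\<in>?S. F (fst (?h x)) (fst (snd (?h x))) (snd (snd (?h x))))"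
    using finsum_reindex[of "\<lambda>t. F (fst t) (fst (snd t)) (snd (snd t))" ?h ?S] assms by simp
  then show ?thesis
    using assms by (simp add: finsum_Sigma finite_antidiag)
qed

lemma ps_const_mult:
  fixes f :: "('n::finite \<Rightarrow> nat) \<Rightarrow> 'a"
  assumes "f \<in> ps_carrier (carrier R)" "c \<in> carrier R"
  shows "ps_const R c \<otimes>\<^bsub>ps_ring R\<^esub> f = (\<lambda>m. c \<otimes> f m)"
proof
  fix m :: "'n \<Rightarrow> nat"
  have "(\<Oplus>p\<in>antidiag m. ps_const R c (fst p) \<otimes> f (snd p)) =
      (\<Oplus>p\<in>antidiag m. if ((\<lambda>i. 0), m) = p then c \<otimes> f (snd p) else \<zero>)"
    by (rule finsum_cong') (use assms in \<open>auto simp: ps_carrier_iff antidiag_def ps_const_def\<close>)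
  also have "\<dots> = c \<otimes> f m"
    using finsum_singleton[of "((\<lambda>i. 0), m)" "antidiag m" "\<lambda>p. c \<otimes> f (snd p)"] assms
    by (simp add: finite_antidiag ps_carrier_iff) (simp add: antidiag_def)
  finally show "(ps_const R c \<otimes>\<^bsub>ps_ring R\<^esub> f) m = c \<otimes> f m"
    by (simp add: ps_ring_simps)
qed

lemma ps_mult_comm:
  fixes f g :: "('n::finite \<Rightarrow> nat) \<Rightarrow> 'a"
  assumes "f \<in> ps_carrier (carrier R)" "g \<in> ps_carrier (carrier R)"
  shows "f \<otimes>\<^bsub>ps_ring R\<^esub> g = g \<otimes>\<^bsub>ps_ring R\<^esub> f"
proof
  fix m :: "'n \<Rightarrow> nat"
  have swap: "prod.swap ` antidiag m = antidiag m"
    by (auto simp: antidiag_def image_iff add.commute)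
  have "(\<Oplus>p\<in>antidiag m. g (fst p) \<otimes> f (snd p)) =
      (\<Oplus>p\<in>antidiag m. g (snd p) \<otimes> f (fst p))"
    using finsum_reindex[of "\<lambda>p. g (fst p) \<otimes> f (snd p)" prod.swap "antidiag m"] assms
    by (simp add: swap ps_carrier_iff)
  also have "\<dots> = (\<Oplus>p\<in>antidiag m. f (fst p) \<otimes> g (snd p))"
    by (rule finsum_cong') (use assms in \<open>auto simp: ps_carrier_iff m_comm\<close>)
  finally show "(f \<otimes>\<^bsub>ps_ring R\<^esub> g) m = (g \<otimes>\<^bsub>ps_ring R\<^esub> f) m"
    by (simp add: ps_ring_simps)
qed

lemma ps_mult_assoc:
  fixes f g h :: "('n::finite \<Rightarrow> nat) \<Rightarrow> 'a"
  assumes "f \<in> ps_carrier (carrier R)" "g \<in> ps_carrier (carrier R)" "h \<in> ps_carrier (carrier R)"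
  shows "f \<otimes>\<^bsub>ps_ring R\<^esub> g \<otimes>\<^bsub>ps_ring R\<^esub> h = f \<otimes>\<^bsub>ps_ring R\<^esub> (g \<otimes>\<^bsub>ps_ring R\<^esub> h)"
proof
  fix m :: "'n \<Rightarrow> nat"
  have C [simp]: "f a \<in> carrier R" "g a \<in> carrier R" "h a \<in> carrier R" for a
    using assms by (auto simp: ps_carrier_iff)
  have "(\<Oplus>p\<in>antidiag m. (\<Oplus>q\<in>antidiag (fst p). f (fst q) \<otimes> g (snd q)) \<otimes> h (snd p)) =
      (\<Oplus>p\<in>antidiag m. \<Oplus>q\<in>antidiag (fst p). f (fst q) \<otimes> g (snd q) \<otimes> h (snd p))"
    by (rule finsum_cong') (auto simp: finsum_ldistr finite_antidiag)
  also have "\<dots> = (\<Oplus>p\<in>antidiag m. \<Oplus>q\<in>antidiag (snd p). f (fst p) \<otimes> (g (fst q) \<otimes> h (snd q)))"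
    using finsum_antidiag_left[of "\<lambda>a b c. f a \<otimes> g b \<otimes> h c"]
      finsum_antidiag_right[of "\<lambda>a b c. f a \<otimes> (g b \<otimes> h c)"] by (simp add: m_assoc)
  also have "\<dots> = (\<Oplus>p\<in>antidiag m. f (fst p) \<otimes> (\<Oplus>q\<in>antidiag (snd p). g (fst q) \<otimes> h (snd q)))"
    by (rule finsum_cong') (auto simp: finsum_rdistr finite_antidiag)
  finally show "(f \<otimes>\<^bsub>ps_ring R\<^esub> g \<otimes>\<^bsub>ps_ring R\<^esub> h) m = (f \<otimes>\<^bsub>ps_ring R\<^esub> (g \<otimes>\<^bsub>ps_ring R\<^esub> h)) m"
    by (simp add: ps_ring_simps)
qed

lemma ps_l_distr:
  fixes f g h :: "('n::finite \<Rightarrow> nat) \<Rightarrow> 'a"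
  assumes "f \<in> ps_carrier (carrier R)" "g \<in> ps_carrier (carrier R)" "h \<in> ps_carrier (carrier R)"
  shows "(f \<oplus>\<^bsub>ps_ring R\<^esub> g) \<otimes>\<^bsub>ps_ring R\<^esub> h =
    f \<otimes>\<^bsub>ps_ring R\<^esub> h \<oplus>\<^bsub>ps_ring R\<^esub> g \<otimes>\<^bsub>ps_ring R\<^esub> h"
proof
  fix m :: "'n \<Rightarrow> nat"
  have C: "f a \<in> carrier R" "g a \<in> carrier R" "h a \<in> carrier R" for a
    using assms by (auto simp: ps_carrier_iff)
  have "(\<Oplus>p\<in>antidiag m. (f (fst p) \<oplus> g (fst p)) \<otimes> h (snd p)) =
      (\<Oplus>p\<in>antidiag m. f (fst p) \<otimes> h (snd p) \<oplus> g (fst p) \<otimes> h (snd p))"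
    by (rule finsum_cong') (simp_all add: C l_distr)
  also have "\<dots> = (\<Oplus>p\<in>antidiag m. f (fst p) \<otimes> h (snd p)) \<oplus> (\<Oplus>p\<in>antidiag m. g (fst p) \<otimes> h (snd p))"
    by (rule finsum_addf) (simp_all add: C)
  finally show "((f \<oplus>\<^bsub>ps_ring R\<^esub> g) \<otimes>\<^bsub>ps_ring R\<^esub> h) m =
      (f \<otimes>\<^bsub>ps_ring R\<^esub> h \<oplus>\<^bsub>ps_ring R\<^esub> g \<otimes>\<^bsub>ps_ring R\<^esub> h) m"
    by (simp add: ps_ring_simps)
qed

lemma cring_ps_ring: "cring (ps_ring R :: (('n::finite \<Rightarrow> nat) \<Rightarrow> 'a) ring)"
proof (rule cringI)
  show "abelian_group (ps_ring R :: (('n \<Rightarrow> nat) \<Rightarrow> 'a) ring)"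
  proof (rule abelian_groupI)
    fix x assume "x \<in> carrier (ps_ring R :: (('n \<Rightarrow> nat) \<Rightarrow> 'a) ring)"
    then show "\<exists>y\<in>carrier (ps_ring R). y \<oplus>\<^bsub>ps_ring R\<^esub> x = \<zero>\<^bsub>ps_ring R\<^esub>"
      by (intro bexI[of _ "\<lambda>m. \<ominus> x m"]) (auto simp: ps_ring_simps ps_carrier_iff l_neg)
  qed (auto simp: ps_ring_simps ps_carrier_iff ps_const_def fun_eq_iff a_ac)
  show "comm_monoid (ps_ring R :: (('n \<Rightarrow> nat) \<Rightarrow> 'a) ring)"
  proof (rule comm_monoidI)
    fix x y :: "('n \<Rightarrow> nat) \<Rightarrow> 'a"
    assume "x \<in> carrier (ps_ring R)" "y \<in> carrier (ps_ring R)"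
    then show "x \<otimes>\<^bsub>ps_ring R\<^esub> y \<in> carrier (ps_ring R)"
      by (auto simp: ps_ring_simps ps_carrier_iff intro!: finsum_closed)
  next
    show "\<one>\<^bsub>ps_ring R\<^esub> \<in> carrier (ps_ring R :: (('n \<Rightarrow> nat) \<Rightarrow> 'a) ring)"
      by (simp add: ps_ring_simps ps_const_in_ps_carrier)
  next
    fix x :: "('n \<Rightarrow> nat) \<Rightarrow> 'a"
    assume "x \<in> carrier (ps_ring R)"
    then show "\<one>\<^bsub>ps_ring R\<^esub> \<otimes>\<^bsub>ps_ring R\<^esub> x = x"
      by (simp add: ps_const_mult ps_ring_simps(1,3)) (simp add: ps_carrier_iff)
  qed (simp_all add: ps_ring_simps(1) ps_mult_comm ps_mult_assoc)
qed (simp add: ps_ring_simps(1) ps_l_distr)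

lemma ps_a_inv:
  assumes "h \<in> carrier (ps_ring R :: (('n::finite \<Rightarrow> nat) \<Rightarrow> 'a) ring)"
  shows "\<ominus>\<^bsub>ps_ring R\<^esub> h = (\<lambda>m. \<ominus> h m)"
proof -
  interpret P: cring "ps_ring R :: (('n \<Rightarrow> nat) \<Rightarrow> 'a) ring" by (rule cring_ps_ring)
  show ?thesis
    using assms by (intro P.minus_equality) (auto simp: ps_ring_simps ps_carrier_iff l_neg)
qed

lemma subring_ps_carrier:
  assumes S: "subring S R"
  shows "subring (ps_carrier S) (ps_ring R :: (('n::finite \<Rightarrow> nat) \<Rightarrow> 'a) ring)"
proof -
  interpret P: cring "ps_ring R :: (('n \<Rightarrow> nat) \<Rightarrow> 'a) ring" by (rule cring_ps_ring)
  have SC: "S \<subseteq> carrier R" using subringE(1)[OF S] .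
  then have carrier: "ps_carrier S \<subseteq> carrier (ps_ring R :: (('n \<Rightarrow> nat) \<Rightarrow> 'a) ring)"
    unfolding ps_ring_simps ps_carrier_def by blast
  show ?thesis
  proof (rule P.subringI)
    show "\<one>\<^bsub>ps_ring R\<^esub> \<in> ps_carrier S"
      using subringE(2,3)[OF S] by (simp add: ps_ring_simps ps_const_in_ps_carrier)
  next
    fix h :: "('n \<Rightarrow> nat) \<Rightarrow> 'a"
    assume h: "h \<in> ps_carrier S"
    then have "\<ominus>\<^bsub>ps_ring R\<^esub> h = (\<lambda>m. \<ominus> h m)"
      using carrier by (intro ps_a_inv) blast
    then show "\<ominus>\<^bsub>ps_ring R\<^esub> h \<in> ps_carrier S"
      using h subringE(5)[OF S] by (simp add: ps_carrier_iff)
  next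
    fix h1 h2 :: "('n \<Rightarrow> nat) \<Rightarrow> 'a"
    assume "h1 \<in> ps_carrier S" "h2 \<in> ps_carrier S"
    then show "h1 \<otimes>\<^bsub>ps_ring R\<^esub> h2 \<in> ps_carrier S" "h1 \<oplus>\<^bsub>ps_ring R\<^esub> h2 \<in> ps_carrier S"
      using subringE(6,7)[OF S]
      by (auto simp: ps_ring_simps ps_carrier_iff finite_antidiag intro!: finsum_in_subring[OF S])
  qed (rule carrier)
qed

lemma ps_mult_const:
  assumes "h \<in> carrier (ps_ring R :: (('n::finite \<Rightarrow> nat) \<Rightarrow> 'a) ring)" "c \<in> carrier R"
  shows "h \<otimes>\<^bsub>ps_ring R\<^esub> ps_const R c = (\<lambda>m. h m \<otimes> c)"
proof -
  have "ps_const R c \<in> ps_carrier (carrier R)"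
    using assms(2) by (simp add: ps_const_in_ps_carrier)
  then have "h \<otimes>\<^bsub>ps_ring R\<^esub> ps_const R c = ps_const R c \<otimes>\<^bsub>ps_ring R\<^esub> h"
    using assms(1) by (intro ps_mult_comm) (simp_all add: ps_ring_simps(1))
  also have "\<dots> = (\<lambda>m. c \<otimes> h m)"
    using assms by (intro ps_const_mult) (simp_all add: ps_ring_simps(1))
  finally show ?thesis
    using assms by (auto simp: ps_ring_simps ps_carrier_iff m_comm)
qed

lemma finsum_ps_ring:
  assumes "finite I" "F \<in> I \<rightarrow> carrier (ps_ring R :: (('n::finite \<Rightarrow> nat) \<Rightarrow> 'a) ring)"
  shows "finsum (ps_ring R) F I = (\<lambda>m. \<Oplus>i\<in>I. F i m)"
proof -
  interpret P: cring "ps_ring R :: (('n \<Rightarrow> nat) \<Rightarrow> 'a) ring" by (rule cring_ps_ring)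
  show ?thesis
    using assms
  proof (induction I rule: finite_induct)
    case empty
    show ?case by (simp add: ps_ring_simps)
  next
    case (insert j I)
    have "finsum (ps_ring R) F (insert j I) = F j \<oplus>\<^bsub>ps_ring R\<^esub> finsum (ps_ring R) F I"
      using insert by (intro P.finsum_insert) auto
    also have "\<dots> = (\<lambda>m. \<Oplus>i\<in>insert j I. F i m)"
      using insert by (auto simp: ps_ring_simps ps_carrier_iff Pi_iff finsum_insert)
    finally show ?case .
  qed
qed

end

section \<open>Polynomial expressions in one element\<close>

text \<open>Horner form: \<open>poly_values R A x n\<close> is the set of values \<open>p(x)\<close> of the
  polynomials \<open>p\<close> over \<open>A\<close> of degree \<open>< n\<close>.\<close>
fun poly_values :: "('a, 'b) ring_scheme \<Rightarrow> 'a set \<Rightarrow> 'a \<Rightarrow> nat \<Rightarrow> 'a set" where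
  "poly_values R A x 0 = {\<zero>\<^bsub>R\<^esub>}"
| "poly_values R A x (Suc n) = {a \<oplus>\<^bsub>R\<^esub> x \<otimes>\<^bsub>R\<^esub> y | a y. a \<in> A \<and> y \<in> poly_values R A x n}"

definition monic_values :: "('a, 'b) ring_scheme \<Rightarrow> 'a set \<Rightarrow> 'a \<Rightarrow> nat \<Rightarrow> 'a set" where
  "monic_values R A x n = {x [^]\<^bsub>R\<^esub> n \<oplus>\<^bsub>R\<^esub> y | y. y \<in> poly_values R A x n}"

lemma (in ring) finsum_lessThan_Suc_shift:
  assumes "\<And>i. i < Suc k \<Longrightarrow> F i \<in> carrier R"
  shows "(\<Oplus>i\<in>{..<Suc k}. F i) = F 0 \<oplus> (\<Oplus>i\<in>{..<k}. F (Suc i))"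
proof -
  have "(\<Oplus>i\<in>{..<Suc k}. F i) = F 0 \<oplus> (\<Oplus>i\<in>Suc ` {..<k}. F i)"
    unfolding lessThan_Suc_eq_insert_0 by (rule finsum_insert) (use assms in auto)
  also have "(\<Oplus>i\<in>Suc ` {..<k}. F i) = (\<Oplus>i\<in>{..<k}. F (Suc i))"
    using assms by (subst finsum_reindex) auto
  finally show ?thesis .
qed

lemma integral_over_mono: "S \<subseteq> T \<Longrightarrow> integral_over R S x \<Longrightarrow> integral_over R T x"
  unfolding integral_over_def by blast

locale adjunction = cring +
  fixes A and x
  assumes subring_A: "subring A R" and x_closed [simp]: "x \<in> carrier R"
begin

abbreviation L where "L \<equiv> poly_values R A x"
abbreviation M where "M \<equiv> monic_values R A x"

lemma A_closed [simp]: "a \<in> A \<Longrightarrow> a \<in> carrier R"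
  using subringE(1)[OF subring_A] by blast

lemma zero_in_A: "\<zero> \<in> A" and one_in_A: "\<one> \<in> A"
  using subringE(2,3)[OF subring_A] by auto

lemma L_SucI: "a \<in> A \<Longrightarrow> y \<in> L n \<Longrightarrow> a \<oplus> x \<otimes> y \<in> L (Suc n)"
  by auto

lemma L_SucE:
  assumes "z \<in> L (Suc n)"
  obtains a y where "a \<in> A" "y \<in> L n" "z = a \<oplus> x \<otimes> y"
  using assms by auto

declare poly_values.simps(2) [simp del]

lemma L_closed [simp]: "y \<in> L n \<Longrightarrow> y \<in> carrier R"
  by (induction n arbitrary: y) (auto elim: L_SucE)

lemma zero_in_L: "\<zero> \<in> L n"
proof (induction n)
  case (Suc n)
  then show ?case using L_SucI[OF zero_in_A Suc] by simp
qed simp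

lemma L_add: "y \<in> L n \<Longrightarrow> z \<in> L n \<Longrightarrow> y \<oplus> z \<in> L n"
proof (induction n arbitrary: y z)
  case (Suc n)
  obtain a y' where y: "a \<in> A" "y' \<in> L n" "y = a \<oplus> x \<otimes> y'"
    using Suc.prems(1) by (rule L_SucE)
  obtain b z' where z: "b \<in> A" "z' \<in> L n" "z = b \<oplus> x \<otimes> z'"
    using Suc.prems(2) by (rule L_SucE)
  have "y \<oplus> z = (a \<oplus> b) \<oplus> x \<otimes> (y' \<oplus> z')"
    using y z A_closed[of a] A_closed[of b] L_closed[OF y(2)] L_closed[OF z(2)] x_closed by algebra
  then show ?case
    using Suc.IH y z subringE(7)[OF subring_A] L_SucI by auto
qed simp

lemma L_neg: "y \<in> L n \<Longrightarrow> \<ominus> y \<in> L n"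
proof (induction n arbitrary: y)
  case (Suc n)
  obtain a y' where y: "a \<in> A" "y' \<in> L n" "y = a \<oplus> x \<otimes> y'"
    using Suc.prems by (rule L_SucE)
  have "\<ominus> y = (\<ominus> a) \<oplus> x \<otimes> (\<ominus> y')"
    using y A_closed[of a] L_closed[OF y(2)] x_closed by algebra
  then show ?case
    using Suc.IH y subringE(5)[OF subring_A] L_SucI by auto
qed simp

lemma L_smult: "c \<in> A \<Longrightarrow> y \<in> L n \<Longrightarrow> c \<otimes> y \<in> L n"
proof (induction n arbitrary: y)
  case (Suc n)
  obtain a y' where y: "a \<in> A" "y' \<in> L n" "y = a \<oplus> x \<otimes> y'"
    using Suc.prems(2) by (rule L_SucE)
  have "c \<otimes> y = (c \<otimes> a) \<oplus> x \<otimes> (c \<otimes> y')"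
    using y A_closed[OF Suc.prems(1)] A_closed[of a] L_closed[OF y(2)] x_closed by algebra
  then show ?case
    using Suc y subringE(6)[OF subring_A] L_SucI by auto
qed simp

lemma L_xmult: "y \<in> L n \<Longrightarrow> x \<otimes> y \<in> L (Suc n)"
  using L_SucI[OF zero_in_A, of y n] by simp

lemma A_in_L_Suc: "a \<in> A \<Longrightarrow> a \<in> L (Suc n)"
  using L_SucI[OF _ zero_in_L, of a n] by simp

lemma L_mono_Suc: "y \<in> L n \<Longrightarrow> y \<in> L (Suc n)"
proof (induction n arbitrary: y)
  case 0
  then show ?case using A_in_L_Suc[OF zero_in_A] by simp
next
  case (Suc n)
  then show ?case by (auto elim!: L_SucE intro!: L_SucI)
qed

lemma L_mono: "n \<le> k \<Longrightarrow> y \<in> L n \<Longrightarrow> y \<in> L k"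
  by (induction k rule: dec_induct) (auto intro: L_mono_Suc)

lemma L_pow_mult: "y \<in> L n \<Longrightarrow> x [^] k \<otimes> y \<in> L (k + n)"
proof (induction k)
  case (Suc k)
  have "x [^] Suc k \<otimes> y = x \<otimes> (x [^] k \<otimes> y)"
    using L_closed[OF Suc.prems] by (simp add: m_ac)
  then show ?case using L_xmult[OF Suc.IH[OF Suc.prems]] by simp
qed simp

lemma L_mult: "y \<in> L n \<Longrightarrow> z \<in> L k \<Longrightarrow> y \<otimes> z \<in> L (n + k)"
proof (induction n arbitrary: y)
  case 0
  then show ?case using zero_in_L by simp
next
  case (Suc n)
  obtain a y' where y: "a \<in> A" "y' \<in> L n" "y = a \<oplus> x \<otimes> y'"
    using Suc.prems(1) by (rule L_SucE)
  have "y \<otimes> z = a \<otimes> z \<oplus> x \<otimes> (y' \<otimes> z)"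
    using y A_closed[of a] L_closed[OF y(2)] L_closed[OF Suc.prems(2)] x_closed by algebra
  moreover have "a \<otimes> z \<in> L (Suc n + k)"
    using L_smult[OF y(1) Suc.prems(2)] by (rule L_mono[rotated]) simp
  moreover have "x \<otimes> (y' \<otimes> z) \<in> L (Suc n + k)"
    using L_xmult[OF Suc.IH[OF y(2) Suc.prems(2)]] by simp
  ultimately show ?case using L_add by simp
qed

lemma pow_in_L: "x [^] n \<in> L (Suc n)"
  using L_pow_mult[OF A_in_L_Suc[OF one_in_A, of 0], of n] by simp

lemma finsum_in_L: "finite I \<Longrightarrow> (\<And>i. i \<in> I \<Longrightarrow> g i \<in> L n) \<Longrightarrow> finsum R g I \<in> L n"
proof (induction I rule: finite_induct)
  case empty
  then show ?case using zero_in_L by simp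
next
  case (insert i I)
  then have "finsum R g (insert i I) = g i \<oplus> finsum R g I"
    by (intro finsum_insert) (auto intro: L_closed)
  then show ?case using insert L_add by simp
qed

lemma L_eq: "L n = {\<Oplus>i\<in>{..<n}. c i \<otimes> x [^] i | c. \<forall>i<n. c i \<in> A}"
proof (intro equalityI subsetI)
  fix y assume "y \<in> {\<Oplus>i\<in>{..<n}. c i \<otimes> x [^] i | c. \<forall>i<n. c i \<in> A}"
  then obtain c where c: "\<forall>i<n. c i \<in> A" "y = (\<Oplus>i\<in>{..<n}. c i \<otimes> x [^] i)"
    by blast
  have "x [^] i \<in> L n" if "i < n" for i
    using L_mono[OF _ pow_in_L] that by simp
  then show "y \<in> L n"
    unfolding c(2) using c(1) by (intro finsum_in_L L_smult) auto
next
  fix y assume "y \<in> L n"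
  then show "y \<in> {\<Oplus>i\<in>{..<n}. c i \<otimes> x [^] i | c. \<forall>i<n. c i \<in> A}"
  proof (induction n arbitrary: y)
    case 0
    then have "y = (\<Oplus>i\<in>{..<0::nat}. \<zero> \<otimes> x [^] i)"
      by simp
    then show ?case
      by (intro CollectI exI[of _ "\<lambda>_. \<zero>"]) simp
  next
    case (Suc n)
    obtain a y' where y: "a \<in> A" "y' \<in> L n" "y = a \<oplus> x \<otimes> y'"
      using Suc.prems by (rule L_SucE)
    obtain c where c: "\<forall>i<n. c i \<in> A" "y' = (\<Oplus>i\<in>{..<n}. c i \<otimes> x [^] i)"
      using Suc.IH[OF y(2)] by blast
    define c' where "c' i = (case i of 0 \<Rightarrow> a | Suc j \<Rightarrow> c j)" for i
    have c'A: "\<forall>i<Suc n. c' i \<in> A"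
      using c y by (auto simp: c'_def split: nat.splits)
    have "(\<Oplus>i\<in>{..<Suc n}. c' i \<otimes> x [^] i) = a \<oplus> (\<Oplus>i\<in>{..<n}. c i \<otimes> x [^] Suc i)"
      using c'A y(1) by (simp add: finsum_lessThan_Suc_shift c'_def)
    also have "(\<Oplus>i\<in>{..<n}. c i \<otimes> x [^] Suc i) = (\<Oplus>i\<in>{..<n}. x \<otimes> (c i \<otimes> x [^] i))"
      by (rule finsum_cong') (use c(1) in \<open>auto simp: m_ac\<close>)
    also have "\<dots> = x \<otimes> y'"
      using c by (simp add: finsum_rdistr Pi_def)
    finally have "y = (\<Oplus>i\<in>{..<Suc n}. c' i \<otimes> x [^] i)"
      using y(3) by simp
    then show ?case
      using c'A by (intro CollectI exI[of _ c'] conjI)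
  qed
qed

lemma integral_over_iff_zero_in_M: "integral_over R A x \<longleftrightarrow> (\<exists>k\<ge>1. \<zero> \<in> M k)"
proof
  assume "integral_over R A x"
  then obtain k :: nat and c where k: "k \<ge> 1" "\<forall>i<k. c i \<in> A"
    and eq: "x [^] k \<oplus> (\<Oplus>i\<in>{..<k}. c i \<otimes> x [^] i) = \<zero>"
    unfolding integral_over_def by blast
  have "(\<Oplus>i\<in>{..<k}. c i \<otimes> x [^] i) \<in> L k"
    unfolding L_eq using k(2) by blast
  then have "\<zero> \<in> M k"
    unfolding monic_values_def eq[symmetric] by blast
  then show "\<exists>k\<ge>1. \<zero> \<in> M k"
    using k(1) by blast
next
  assume "\<exists>k\<ge>1. \<zero> \<in> M k"
  then obtain k y where k: "k \<ge> 1" "y \<in> L k" "x [^] k \<oplus> y = \<zero>"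
    unfolding monic_values_def by force
  then obtain c where "\<forall>i<k. c i \<in> A" "y = (\<Oplus>i\<in>{..<k}. c i \<otimes> x [^] i)"
    unfolding L_eq by blast
  then show "integral_over R A x"
    unfolding integral_over_def using k by blast
qed

lemma M_closed: "y \<in> M n \<Longrightarrow> y \<in> carrier R"
  by (auto simp: monic_values_def)

lemma M_L_mult: "y \<in> M n \<Longrightarrow> z \<in> L k \<Longrightarrow> y \<otimes> z \<in> L (n + k)"
proof -
  assume "y \<in> M n" "z \<in> L k"
  then obtain l where l: "l \<in> L n" "y = x [^] n \<oplus> l" by (auto simp: monic_values_def)
  then have "y \<otimes> z = x [^] n \<otimes> z \<oplus> l \<otimes> z"
    using \<open>z \<in> L k\<close> by (simp add: l_distr)
  then show ?thesis
    using L_add L_pow_mult[OF \<open>z \<in> L k\<close>] L_mult[OF l(1) \<open>z \<in> L k\<close>] by simp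
qed

lemma M_mult: "y \<in> M n \<Longrightarrow> z \<in> M k \<Longrightarrow> y \<otimes> z \<in> M (n + k)"
proof -
  assume y: "y \<in> M n" and "z \<in> M k"
  then obtain l where l: "l \<in> L k" "z = x [^] k \<oplus> l" by (auto simp: monic_values_def)
  obtain l' where l': "l' \<in> L n" "y = x [^] n \<oplus> l'" using y by (auto simp: monic_values_def)
  have "y \<otimes> z = x [^] (n + k) \<oplus> (x [^] k \<otimes> l' \<oplus> y \<otimes> l)"
    using l l' by (simp add: r_distr l_distr nat_pow_mult[symmetric] m_comm a_assoc a_lcomm)
  moreover have "x [^] k \<otimes> l' \<oplus> y \<otimes> l \<in> L (n + k)"
    using L_add L_pow_mult[OF l'(1), of k] M_L_mult[OF y l(1)] by (simp add: add.commute)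
  ultimately show ?thesis by (auto simp: monic_values_def)
qed

lemma M_add_L: "y \<in> M n \<Longrightarrow> z \<in> L n \<Longrightarrow> y \<oplus> z \<in> M n"
proof -
  assume "y \<in> M n" "z \<in> L n"
  then obtain l where l: "l \<in> L n" "y = x [^] n \<oplus> l" by (auto simp: monic_values_def)
  then have "y \<oplus> z = x [^] n \<oplus> (l \<oplus> z)"
    using \<open>z \<in> L n\<close> by (simp add: a_assoc)
  then show ?thesis using L_add l \<open>z \<in> L n\<close> by (auto simp: monic_values_def)
qed

lemma x_in_M: "x \<in> M 1"
  using zero_in_L[of 1] by (auto simp: monic_values_def intro!: exI[of _ \<zero>])

lemma L_Suc_top:
  assumes "y \<in> L (Suc n)"
  obtains z a where "z \<in> L n" "a \<in> A" "y = z \<oplus> a \<otimes> x [^] n"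
  using assms
proof (induction n arbitrary: y thesis)
  case 0
  then obtain a where "a \<in> A" "y = a"
    by (auto elim: L_SucE)
  then show ?case
    using 0(1)[of \<zero> a] zero_in_L by simp
next
  case (Suc n)
  obtain a y' where y: "a \<in> A" "y' \<in> L (Suc n)" "y = a \<oplus> x \<otimes> y'"
    using Suc.prems(2) by (rule L_SucE)
  obtain z a' where z: "z \<in> L n" "a' \<in> A" "y' = z \<oplus> a' \<otimes> x [^] n"
    using Suc.IH[OF _ y(2)] by blast
  have "y = (a \<oplus> x \<otimes> z) \<oplus> a' \<otimes> (x \<otimes> x [^] n)"
    unfolding y(3) z(3) using y(1) z A_closed[of a] A_closed[of a'] L_closed[OF z(1)]
      x_closed nat_pow_closed[OF x_closed, of n] by algebra
  then have "y = (a \<oplus> x \<otimes> z) \<oplus> a' \<otimes> x [^] Suc n"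
    by (simp add: m_comm)
  then show ?case
    using Suc.prems(1) L_SucI[OF y(1) z(1)] z(2) by blast
qed

context
  fixes d :: nat
  assumes d_pos: "1 \<le> d" and pow_in_L_d: "x [^] d \<in> L d"
begin

lemma L_d_xmult: "y \<in> L d \<Longrightarrow> x \<otimes> y \<in> L d"
proof -
  assume y: "y \<in> L d"
  obtain d' where d': "d = Suc d'" using d_pos by (cases d) auto
  obtain z a where z: "z \<in> L d'" "a \<in> A" "y = z \<oplus> a \<otimes> x [^] d'"
    using y unfolding d' by (rule L_Suc_top)
  have "x \<otimes> y = x \<otimes> z \<oplus> a \<otimes> (x \<otimes> x [^] d')"
    unfolding z(3)
    using A_closed[OF z(2)] L_closed[OF z(1)] x_closed nat_pow_closed[OF x_closed, of d'] by algebra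
  also have "x \<otimes> x [^] d' = x [^] d"
    by (simp add: d' m_comm)
  finally show ?thesis
    using L_xmult[OF z(1)] L_smult[OF z(2) pow_in_L_d] L_add d' by simp
qed

lemma L_d_mult: "y \<in> L n \<Longrightarrow> z \<in> L d \<Longrightarrow> y \<otimes> z \<in> L d"
proof (induction n arbitrary: y)
  case 0
  then show ?case using zero_in_L by simp
next
  case (Suc n)
  obtain a y' where y: "a \<in> A" "y' \<in> L n" "y = a \<oplus> x \<otimes> y'"
    using Suc.prems(1) by (rule L_SucE)
  have "y \<otimes> z = a \<otimes> z \<oplus> x \<otimes> (y' \<otimes> z)"
    using y A_closed[of a] L_closed[OF y(2)] L_closed[OF Suc.prems(2)] x_closed by algebra
  then show ?case
    using L_add L_smult[OF y(1) Suc.prems(2)] L_d_xmult[OF Suc.IH[OF y(2) Suc.prems(2)]] by simp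
qed

lemma A_subset_L_d: "A \<subseteq> L d"
  using A_in_L_Suc L_mono[of 1 d] d_pos by auto

lemma subring_L_d: "subring (L d) R"
proof (rule subringI)
  show "L d \<subseteq> carrier R" by auto
  show "\<one> \<in> L d" using A_subset_L_d one_in_A by blast
qed (auto intro: L_neg L_d_mult L_add)

lemma x_in_L_d: "x \<in> L d"
  using L_d_xmult[of \<one>] A_subset_L_d one_in_A by auto

end

lemma integral_over_imp_pow_in_L:
  assumes "integral_over R A x"
  obtains d where "1 \<le> d" "x [^] d \<in> L d"
proof -
  obtain d l where d: "1 \<le> d" "l \<in> L d" "x [^] d \<oplus> l = \<zero>"
    using assms unfolding integral_over_iff_zero_in_M monic_values_def by auto
  then have "x [^] d = \<ominus> l"
    by (intro minus_equality[symmetric]) auto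
  then show ?thesis
    using that d L_neg by simp
qed

section \<open>The determinant trick\<close>

text \<open>Fraction-free Gaussian elimination: \<open>C\<close> is a matrix of polynomial expressions in
  \<open>x\<close> whose diagonal entries are monic of degree \<open>n\<close> and whose other entries have
  degree \<open>< n\<close>.  Eliminating one unknown keeps this shape with \<open>n\<close> doubled, and the
  pivots multiply up to a monic annihilator of every solution.\<close>

lemma eliminate_unknown:
  assumes I: "finite I" "i0 \<notin> I" and g: "g \<in> insert i0 I \<rightarrow> carrier R"
    and diag: "\<forall>i\<in>insert i0 I. C i i \<in> M n"
    and off: "\<forall>i\<in>insert i0 I. \<forall>j\<in>insert i0 I. i \<noteq> j \<longrightarrow> C i j \<in> L n"
    and eqs: "\<forall>i\<in>insert i0 I. (\<Oplus>j\<in>insert i0 I. C i j \<otimes> g j) = \<zero>"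
  defines "C' \<equiv> \<lambda>i j. C i0 i0 \<otimes> C i j \<oplus> (\<ominus> C i i0) \<otimes> C i0 j"
  shows "\<forall>i\<in>I. C' i i \<in> M (n + n)"
    and "\<forall>i\<in>I. \<forall>j\<in>I. i \<noteq> j \<longrightarrow> C' i j \<in> L (n + n)"
    and "\<forall>i\<in>I. (\<Oplus>j\<in>I. C' i j \<otimes> g j) = \<zero>"
proof -
  have gC: "g j \<in> carrier R" if "j \<in> insert i0 I" for j
    using g that by blast
  have CC: "C i j \<in> carrier R" if "i \<in> insert i0 I" "j \<in> insert i0 I" for i j
    using that diag off M_closed L_closed by (cases "i = j") blast+
  have i0: "i0 \<in> insert i0 I" by simp
  define s where "s i = (\<Oplus>j\<in>I. C i j \<otimes> g j)" for i
  have sC: "s i \<in> carrier R" if "i \<in> insert i0 I" for i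
    unfolding s_def using that CC gC by (auto intro!: finsum_closed)
  have s_eq: "s i = \<ominus> (C i i0 \<otimes> g i0)" if i: "i \<in> insert i0 I" for i
  proof -
    have "(\<Oplus>j\<in>insert i0 I. C i j \<otimes> g j) = C i i0 \<otimes> g i0 \<oplus> s i"
      unfolding s_def by (rule finsum_insert) (use I CC[OF i] gC in auto)
    then have "C i i0 \<otimes> g i0 \<oplus> s i = \<zero>"
      using eqs i by metis
    then show ?thesis
      using CC[OF i i0] gC[OF i0] sC[OF i] by (intro minus_equality[symmetric]) (simp_all add: a_comm)
  qed
  show "\<forall>i\<in>I. C' i i \<in> M (n + n)"
  proof
    fix i assume i: "i \<in> I"
    then have "C i i0 \<in> L n" "C i0 i \<in> L n"
      using off I(2) by auto
    then have "(\<ominus> C i i0) \<otimes> C i0 i \<in> L (n + n)"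
      by (intro L_mult L_neg)
    moreover have "C i0 i0 \<otimes> C i i \<in> M (n + n)"
      using diag i by (intro M_mult) auto
    ultimately show "C' i i \<in> M (n + n)"
      unfolding C'_def by (rule M_add_L[rotated])
  qed
  show "\<forall>i\<in>I. \<forall>j\<in>I. i \<noteq> j \<longrightarrow> C' i j \<in> L (n + n)"
  proof (intro ballI impI)
    fix i j assume ij: "i \<in> I" "j \<in> I" "i \<noteq> j"
    then have "C i i0 \<in> L n" "C i0 j \<in> L n" "C i j \<in> L n"
      using off I(2) by auto
    then show "C' i j \<in> L (n + n)"
      unfolding C'_def using diag by (intro L_add L_mult L_neg M_L_mult) auto
  qed
  show "\<forall>i\<in>I. (\<Oplus>j\<in>I. C' i j \<otimes> g j) = \<zero>"
  proof
    fix i assume "i \<in> I"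
    then have i: "i \<in> insert i0 I" by simp
    have "(\<Oplus>j\<in>I. C' i j \<otimes> g j) =
        (\<Oplus>j\<in>I. C i0 i0 \<otimes> (C i j \<otimes> g j) \<oplus> (\<ominus> C i i0) \<otimes> (C i0 j \<otimes> g j))"
      unfolding C'_def using CC[OF i0] CC[OF i] gC
      by (intro finsum_cong') (auto simp: l_distr m_assoc)
    also have "\<dots> = C i0 i0 \<otimes> s i \<oplus> (\<ominus> C i i0) \<otimes> s i0"
      unfolding s_def using CC[OF i0] CC[OF i] gC I(1)
      by (simp add: finsum_addf finsum_rdistr)
    also have "\<dots> = \<zero>"
      unfolding s_eq[OF i] s_eq[OF i0] using CC[OF i0 i0] CC[OF i i0] gC[OF i0] by algebra
    finally show "(\<Oplus>j\<in>I. C' i j \<otimes> g j) = \<zero>" .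
  qed
qed

lemma monic_annihilator:
  assumes "finite I" "g \<in> I \<rightarrow> carrier R"
    and "\<forall>i\<in>I. C i i \<in> M n" "\<forall>i\<in>I. \<forall>j\<in>I. i \<noteq> j \<longrightarrow> C i j \<in> L n"
    and "\<forall>i\<in>I. (\<Oplus>j\<in>I. C i j \<otimes> g j) = \<zero>"
  shows "\<exists>k\<ge>1. \<exists>q\<in>M k. \<forall>i\<in>I. q \<otimes> g i = \<zero>"
  using assms
proof (induction I arbitrary: C n rule: finite_induct)
  case empty
  show ?case using x_in_M by blast
next
  case (insert i0 I C n)
  note elim = eliminate_unknown[OF insert.hyps insert.prems]
  have "g \<in> I \<rightarrow> carrier R"
    using insert.prems(1) by auto
  then obtain k q where k: "k \<ge> 1" "q \<in> M k" and q: "\<forall>i\<in>I. q \<otimes> g i = \<zero>"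
    using insert.IH[OF _ elim] by blast
  have i0: "i0 \<in> insert i0 I" by simp
  have gC: "g j \<in> carrier R" if "j \<in> insert i0 I" for j
    using insert.prems(1) that by blast
  have CC: "C i0 j \<in> carrier R" if "j \<in> insert i0 I" for j
  proof (cases "j = i0")
    case True
    have "C i0 i0 \<in> M n" using insert.prems(2) by simp
    then show ?thesis using True M_closed by simp
  next
    case False
    then have "C i0 j \<in> L n" using insert.prems(3) that by simp
    then show ?thesis by simp
  qed
  have qC: "q \<in> carrier R" using M_closed[OF k(2)] .
  have "q \<otimes> C i0 i0 \<in> M (k + n)"
    using k(2) insert.prems(2) by (intro M_mult) auto
  moreover have "q \<otimes> C i0 i0 \<otimes> g i = \<zero>" if i: "i \<in> insert i0 I" for i
  proof (cases "i = i0")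
    case True
    have "\<zero> = q \<otimes> (\<Oplus>j\<in>insert i0 I. C i0 j \<otimes> g j)"
      using insert.prems(4) qC by simp
    also have "\<dots> = q \<otimes> (C i0 i0 \<otimes> g i0) \<oplus> (\<Oplus>j\<in>I. q \<otimes> (C i0 j \<otimes> g j))"
      using insert.hyps CC gC qC by (simp add: finsum_rdistr r_distr)
    also have "(\<Oplus>j\<in>I. q \<otimes> (C i0 j \<otimes> g j)) = (\<Oplus>j\<in>I. \<zero>)"
      using q CC gC qC by (intro finsum_cong') (auto simp: m_lcomm[of q])
    also have "q \<otimes> (C i0 i0 \<otimes> g i0) \<oplus> (\<Oplus>j\<in>I. \<zero>) = q \<otimes> C i0 i0 \<otimes> g i"
      using True CC gC qC by (simp add: m_assoc)
    finally show ?thesis by simp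
  next
    case False
    then have "q \<otimes> C i0 i0 \<otimes> g i = C i0 i0 \<otimes> (q \<otimes> g i)"
      using i CC[OF i0] gC[OF i] qC by (simp add: m_ac)
    then show ?thesis using q False i CC[OF i0] by simp
  qed
  ultimately have "\<exists>q'\<in>M (k + n). \<forall>i\<in>insert i0 I. q' \<otimes> g i = \<zero>"
    by blast
  then show ?case
    using k(1) by (intro exI[of _ "k + n"]) simp
qed

lemma determinant_trick:
  assumes I: "finite I" and g: "g \<in> I \<rightarrow> carrier R"
    and rel: "\<And>i. i \<in> I \<Longrightarrow> \<exists>a\<in>I \<rightarrow> A. x \<otimes> g i = (\<Oplus>j\<in>I. a j \<otimes> g j)"
    and u: "u \<in> I \<rightarrow> carrier R" and one: "\<one> = (\<Oplus>j\<in>I. u j \<otimes> g j)"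
  shows "integral_over R A x"
proof -
  have "\<forall>i\<in>I. \<exists>a. a \<in> I \<rightarrow> A \<and> x \<otimes> g i = (\<Oplus>j\<in>I. a j \<otimes> g j)"
    using rel by blast
  then obtain a where a: "\<And>i. i \<in> I \<Longrightarrow> a i \<in> I \<rightarrow> A \<and> x \<otimes> g i = (\<Oplus>j\<in>I. a i j \<otimes> g j)"
    using bchoice[of I "\<lambda>i a. a \<in> I \<rightarrow> A \<and> x \<otimes> g i = (\<Oplus>j\<in>I. a j \<otimes> g j)"] by blast
  have aA: "a i j \<in> A" if "i \<in> I" "j \<in> I" for i j
    using a that by blast
  have gC: "g j \<in> carrier R" if "j \<in> I" for j
    using g that by blast
  define C where "C i j = (if i = j then x else \<zero>) \<ominus> a i j" for i j
  have "\<ominus> a i j \<in> L 1" if "i \<in> I" "j \<in> I" for i j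
    using L_neg[OF A_in_L_Suc[OF aA[OF that]]] by simp
  then have "\<forall>i\<in>I. C i i \<in> M 1" "\<forall>i\<in>I. \<forall>j\<in>I. i \<noteq> j \<longrightarrow> C i j \<in> L 1"
    using aA by (auto simp: C_def monic_values_def minus_eq)
  moreover have "\<forall>i\<in>I. (\<Oplus>j\<in>I. C i j \<otimes> g j) = \<zero>"
  proof
    fix i assume i: "i \<in> I"
    have "C i j \<otimes> g j = (if i = j then x \<otimes> g j else \<zero>) \<oplus> (\<ominus> \<one>) \<otimes> (a i j \<otimes> g j)"
      if "j \<in> I" for j
      using aA[OF i that] gC[OF that] unfolding C_def
      by (cases "i = j") (simp_all add: minus_eq l_distr l_minus m_assoc)
    then have "(\<Oplus>j\<in>I. C i j \<otimes> g j) =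
        (\<Oplus>j\<in>I. (if i = j then x \<otimes> g j else \<zero>) \<oplus> (\<ominus> \<one>) \<otimes> (a i j \<otimes> g j))"
      using aA[OF i] gC by (intro finsum_cong') auto
    also have "\<dots> = (\<Oplus>j\<in>I. if i = j then x \<otimes> g j else \<zero>) \<oplus>
        (\<Oplus>j\<in>I. (\<ominus> \<one>) \<otimes> (a i j \<otimes> g j))"
      using aA[OF i] gC by (intro finsum_addf) auto
    also have "(\<Oplus>j\<in>I. if i = j then x \<otimes> g j else \<zero>) = x \<otimes> g i"
      using finsum_singleton[of i I "\<lambda>j. x \<otimes> g j"] i I gC by auto
    also have "(\<Oplus>j\<in>I. (\<ominus> \<one>) \<otimes> (a i j \<otimes> g j)) = (\<ominus> \<one>) \<otimes> (\<Oplus>j\<in>I. a i j \<otimes> g j)"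
      using aA[OF i] gC I by (intro finsum_rdistr[symmetric]) auto
    also have "x \<otimes> g i \<oplus> (\<ominus> \<one>) \<otimes> (\<Oplus>j\<in>I. a i j \<otimes> g j) = \<zero>"
      using a[OF i, THEN conjunct2, symmetric] gC[OF i] by (simp add: l_minus r_neg)
    finally show "(\<Oplus>j\<in>I. C i j \<otimes> g j) = \<zero>" .
  qed
  ultimately obtain k q where k: "k \<ge> 1" "q \<in> M k" and q: "\<forall>j\<in>I. q \<otimes> g j = \<zero>"
    using monic_annihilator[OF I g] by blast
  have qC: "q \<in> carrier R" using M_closed[OF k(2)] .
  have "q = q \<otimes> (\<Oplus>j\<in>I. u j \<otimes> g j)"
    using qC by (simp flip: one)
  also have "\<dots> = (\<Oplus>j\<in>I. q \<otimes> (u j \<otimes> g j))"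
    using qC u gC I by (intro finsum_rdistr) auto
  also have "\<dots> = (\<Oplus>j\<in>I. \<zero>)"
    using q u gC qC by (intro finsum_cong') (auto simp: m_lcomm[of q] Pi_iff)
  also have "\<dots> = \<zero>"
    by simp
  finally show ?thesis
    using k integral_over_iff_zero_in_M by blast
qed

end

section \<open>Finitely generated modules over a subring\<close>

definition span :: "('a, 'b) ring_scheme \<Rightarrow> 'a set \<Rightarrow> 'a set \<Rightarrow> 'a set" where
  "span R S E = {\<Oplus>\<^bsub>R\<^esub>e\<in>E. c e \<otimes>\<^bsub>R\<^esub> e | c. c \<in> E \<rightarrow> S}"

definition module_finite :: "('a, 'b) ring_scheme \<Rightarrow> 'a set \<Rightarrow> 'a set \<Rightarrow> bool" where
  "module_finite R S T \<longleftrightarrow> (\<exists>E. finite E \<and> E \<subseteq> T \<and> T \<subseteq> span R S E)"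

lemma (in ring) subring_nat_pow_closed: "subring H R \<Longrightarrow> h \<in> H \<Longrightarrow> h [^] (n::nat) \<in> H"
  by (induction n) (simp_all add: subringE(3,6))

context cring
begin

context
  fixes S assumes S: "subring S R"
begin

lemma S_closed: "s \<in> S \<Longrightarrow> s \<in> carrier R"
  using subringE(1)[OF S] by blast

lemma span_closed: "E \<subseteq> carrier R \<Longrightarrow> y \<in> span R S E \<Longrightarrow> y \<in> carrier R"
  unfolding span_def using S_closed by (auto intro!: finsum_closed)

lemma zero_in_span: "E \<subseteq> carrier R \<Longrightarrow> \<zero> \<in> span R S E"
proof -
  assume E: "E \<subseteq> carrier R"
  have "(\<Oplus>e\<in>E. \<zero> \<otimes> e) = (\<Oplus>e\<in>E. \<zero>)"
    using E by (intro finsum_cong') auto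
  then have "(\<Oplus>e\<in>E. \<zero> \<otimes> e) = \<zero>"
    by simp
  then show ?thesis
    unfolding span_def using subringE(2)[OF S] by force
qed

lemma span_add:
  assumes E: "finite E" "E \<subseteq> carrier R" and "y \<in> span R S E" "z \<in> span R S E"
  shows "y \<oplus> z \<in> span R S E"
proof -
  obtain c c' where c: "c \<in> E \<rightarrow> S" "y = (\<Oplus>e\<in>E. c e \<otimes> e)"
    and c': "c' \<in> E \<rightarrow> S" "z = (\<Oplus>e\<in>E. c' e \<otimes> e)"
    using assms(3,4) unfolding span_def by blast
  have cC: "c e \<in> carrier R" "c' e \<in> carrier R" if "e \<in> E" for e
    using c c' that S_closed by auto
  have "y \<oplus> z = (\<Oplus>e\<in>E. c e \<otimes> e \<oplus> c' e \<otimes> e)"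
    unfolding c(2) c'(2) using E cC by (intro finsum_addf[symmetric]) auto
  also have "\<dots> = (\<Oplus>e\<in>E. (c e \<oplus> c' e) \<otimes> e)"
    using E cC by (intro finsum_cong') (auto simp: l_distr)
  finally show ?thesis
    unfolding span_def using c(1) c'(1) subringE(7)[OF S] by force
qed

lemma span_smult:
  assumes E: "finite E" "E \<subseteq> carrier R" and s: "s \<in> S" and "y \<in> span R S E"
  shows "s \<otimes> y \<in> span R S E"
proof -
  obtain c where c: "c \<in> E \<rightarrow> S" "y = (\<Oplus>e\<in>E. c e \<otimes> e)"
    using assms(4) unfolding span_def by blast
  have cC: "c e \<in> carrier R" if "e \<in> E" for e
    using c that S_closed by auto
  have "s \<otimes> y = (\<Oplus>e\<in>E. s \<otimes> (c e \<otimes> e))"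
    unfolding c(2) using E cC S_closed[OF s] by (intro finsum_rdistr) auto
  also have "\<dots> = (\<Oplus>e\<in>E. (s \<otimes> c e) \<otimes> e)"
    using E cC S_closed[OF s] by (intro finsum_cong') (auto simp: m_assoc)
  finally show ?thesis
    unfolding span_def using c(1) s subringE(6)[OF S] by force
qed

lemma generator_in_span:
  assumes E: "finite E" "E \<subseteq> carrier R" and e0: "e0 \<in> E"
  shows "e0 \<in> span R S E"
proof -
  have "(\<Oplus>e\<in>E. (if e = e0 then \<one> else \<zero>) \<otimes> e) = (\<Oplus>e\<in>E. if e0 = e then e else \<zero>)"
    using E by (intro finsum_cong') auto
  also have "\<dots> = e0"
    using finsum_singleton[of e0 E "\<lambda>e. e"] assms by auto
  finally show ?thesis
    unfolding span_def using subringE(2,3)[OF S]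
    by (intro CollectI exI[of _ "\<lambda>e. if e = e0 then \<one> else \<zero>"]) auto
qed

lemma finsum_in_span:
  assumes E: "finite E" "E \<subseteq> carrier R"
  shows "finite I \<Longrightarrow> (\<And>i. i \<in> I \<Longrightarrow> F i \<in> span R S E) \<Longrightarrow> finsum R F I \<in> span R S E"
proof (induction I rule: finite_induct)
  case empty
  then show ?case using zero_in_span[OF E(2)] by simp
next
  case (insert i I)
  then have "finsum R F (insert i I) = F i \<oplus> finsum R F I"
    using span_closed[OF E(2)] by (intro finsum_insert) auto
  then show ?case
    using insert span_add[OF E] by simp
qed

lemma span_mult:
  assumes E: "finite E" "E \<subseteq> carrier R" and E': "finite E'" "E' \<subseteq> carrier R"
    and z: "z \<in> carrier R" and y: "y \<in> span R S E"
    and gen: "\<And>e. e \<in> E \<Longrightarrow> z \<otimes> e \<in> span R S E'"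
  shows "z \<otimes> y \<in> span R S E'"
proof -
  obtain c where c: "c \<in> E \<rightarrow> S" "y = (\<Oplus>e\<in>E. c e \<otimes> e)"
    using y unfolding span_def by blast
  have cC: "c e \<in> carrier R" if "e \<in> E" for e
    using c that S_closed by auto
  have "z \<otimes> y = (\<Oplus>e\<in>E. z \<otimes> (c e \<otimes> e))"
    unfolding c(2) using E cC z by (intro finsum_rdistr) auto
  also have "\<dots> = (\<Oplus>e\<in>E. c e \<otimes> (z \<otimes> e))"
    using E cC z by (intro finsum_cong') (auto simp: m_lcomm)
  also have "\<dots> \<in> span R S E'"
  proof (rule finsum_in_span[OF E' E(1)])
    fix e assume e: "e \<in> E"
    show "c e \<otimes> (z \<otimes> e) \<in> span R S E'"
      by (rule span_smult[OF E' funcset_mem[OF c(1) e] gen[OF e]])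
  qed
  finally show ?thesis .
qed

lemma span_subset_span:
  assumes E: "finite E" "E \<subseteq> carrier R" and E': "finite E'" "E' \<subseteq> carrier R"
    and "E \<subseteq> span R S E'"
  shows "span R S E \<subseteq> span R S E'"
proof
  fix y assume y: "y \<in> span R S E"
  have "\<one> \<otimes> e \<in> span R S E'" if "e \<in> E" for e
    using that assms by (simp add: subsetD)
  then have "\<one> \<otimes> y \<in> span R S E'"
    by (intro span_mult[OF E E' _ y]) auto
  then show "y \<in> span R S E'"
    using span_closed[OF E(2) y] by simp
qed

end

end

lemma (in adjunction) L_subset_span:
  assumes S: "subring S R" and E: "finite E" "E \<subseteq> carrier R" and A: "A \<subseteq> span R S E"
  shows "L n \<subseteq> span R S ((\<lambda>(e, i). e \<otimes> x [^] (i::nat)) ` (E \<times> {..<n}))"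
proof -
  let ?E = "\<lambda>n. (\<lambda>(e, i). e \<otimes> x [^] (i::nat)) ` (E \<times> {..<n})"
  have fin: "finite (?E n)" and carr: "?E n \<subseteq> carrier R" for n
    using E by auto
  show ?thesis
  proof (induction n)
    case 0
    show ?case using zero_in_span[OF S carr[of 0]] by simp
  next
    case (Suc n)
    have "E \<subseteq> span R S (?E (Suc n))"
    proof
      fix e assume e: "e \<in> E"
      then have "e \<otimes> x [^] (0::nat) \<in> ?E (Suc n)" by force
      then have "e \<otimes> x [^] (0::nat) \<in> span R S (?E (Suc n))"
        by (rule generator_in_span[OF S fin carr])
      then show "e \<in> span R S (?E (Suc n))"
        using e E(2) by (simp add: subsetD)
    qed
    then have A': "A \<subseteq> span R S (?E (Suc n))"
      using A span_subset_span[OF S E fin carr] by blast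
    have x_mult: "x \<otimes> y \<in> span R S (?E (Suc n))" if "y \<in> L n" for y
    proof (rule span_mult[OF S fin carr fin carr x_closed])
      show "y \<in> span R S (?E n)" using Suc.IH that ..
    next
      fix e' assume "e' \<in> ?E n"
      then obtain e i where ei: "e \<in> E" "i < n" "e' = e \<otimes> x [^] i" by auto
      then have "x \<otimes> e' = e \<otimes> x [^] Suc i"
        using E(2) by (auto simp: m_lcomm m_comm)
      moreover have "e \<otimes> x [^] Suc i \<in> ?E (Suc n)"
        using ei by force
      ultimately show "x \<otimes> e' \<in> span R S (?E (Suc n))"
        using generator_in_span[OF S fin carr] by simp
    qed
    show ?case
      using A' x_mult span_add[OF S fin carr] by (auto elim!: L_SucE)
  qed
qed

lemma (in cring) module_finite_generate_ring:
  assumes S: "subring S R"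
  shows "finite B \<Longrightarrow> B \<subseteq> carrier R \<Longrightarrow> \<forall>b\<in>B. integral_over R S b \<Longrightarrow>
    module_finite R S (generate_ring R (S \<union> B))"
proof (induction B rule: finite_induct)
  case empty
  have SC: "S \<subseteq> carrier R" using subringE(1)[OF S] .
  have "generate_ring R S = S"
  proof
    show "generate_ring R S \<subseteq> S" by (rule generate_ring_min_subring1[OF SC S]) simp
    show "S \<subseteq> generate_ring R S" by (rule generate_ringE(2)[OF SC refl])
  qed
  moreover have "S \<subseteq> span R S {\<one>}"
  proof
    fix s assume s: "s \<in> S"
    then have "s = (\<Oplus>e\<in>{\<one>}. s \<otimes> e)"
      using SC by (simp add: subsetD)
    then show "s \<in> span R S {\<one>}"
      unfolding span_def using s by (intro CollectI exI[of _ "\<lambda>_. s"] conjI) auto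
  qed
  moreover have "{\<one>} \<subseteq> S" using subringE(3)[OF S] by simp
  ultimately show ?case
    unfolding module_finite_def Un_empty_right by (intro exI[of _ "{\<one>}"]) simp
next
  case (insert b B)
  let ?T = "generate_ring R (S \<union> B)" and ?T' = "generate_ring R (S \<union> insert b B)"
  have SC: "S \<union> B \<subseteq> carrier R" "S \<union> insert b B \<subseteq> carrier R"
    using insert.prems(1) subringE(1)[OF S] by auto
  have "module_finite R S ?T"
    by (rule insert.IH) (use insert.prems in auto)
  then obtain E where E: "finite E" "E \<subseteq> ?T" "?T \<subseteq> span R S E"
    unfolding module_finite_def by blast
  have T: "subring ?T R" and T': "subring ?T' R"
    using generate_ring_is_subring[OF SC(1)] generate_ring_is_subring[OF SC(2)] .
  have SB: "S \<union> B \<subseteq> ?T"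
    by (rule generate_ringE(2)[OF SC(1) refl])
  have EC: "E \<subseteq> carrier R"
    using E(2) subringE(1)[OF T] by (rule order_trans)
  interpret b: adjunction R ?T b
    by (intro adjunction.intro adjunction_axioms.intro is_cring T) (use insert.prems(1) in simp)
  have "integral_over R S b"
    using insert.prems(2) by blast
  then have "integral_over R ?T b"
    by (rule integral_over_mono[rotated]) (use SB in blast)
  then obtain d where d: "1 \<le> d" "b [^] d \<in> b.L d"
    by (rule b.integral_over_imp_pow_in_L)
  have "S \<union> insert b B \<subseteq> b.L d"
    using SB b.A_subset_L_d[OF d] b.x_in_L_d[OF d] by auto
  then have T'_L: "?T' \<subseteq> b.L d"
    by (rule generate_ring_min_subring1[OF SC(2) b.subring_L_d[OF d]])
  let ?E' = "(\<lambda>(e, i). e \<otimes> b [^] (i::nat)) ` (E \<times> {..<d})"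
  have "?T \<subseteq> ?T'"
    by (rule mono_generate_ring) (use SC in auto)
  moreover have "b \<in> ?T'"
    by (rule generate_ring.incl) simp
  ultimately have "?E' \<subseteq> ?T'"
    using E(2) subringE(6)[OF T'] subring_nat_pow_closed[OF T'] by auto
  moreover have "?T' \<subseteq> span R S ?E'"
    using T'_L b.L_subset_span[OF S E(1) EC E(3)] by (rule order_trans)
  moreover have "finite ?E'"
    using E(1) by simp
  ultimately show ?case
    unfolding module_finite_def by blast
qed

section \<open>Integrality over power series\<close>

lemma (in cring) ps_in_span_of_consts:
  fixes h :: "('n::finite \<Rightarrow> nat) \<Rightarrow> 'a"
  assumes S: "subring S R" and E: "finite E" "E \<subseteq> carrier R"
    and h: "h \<in> ps_carrier (span R S E)"
  shows "\<exists>a\<in>E \<rightarrow> ps_carrier S. h = (\<Oplus>\<^bsub>ps_ring R\<^esub>e\<in>E. a e \<otimes>\<^bsub>ps_ring R\<^esub> ps_const R e)"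
proof -
  interpret P: cring "ps_ring R :: (('n \<Rightarrow> nat) \<Rightarrow> 'a) ring" by (rule cring_ps_ring)
  have "\<forall>m. \<exists>c. c \<in> E \<rightarrow> S \<and> h m = (\<Oplus>e\<in>E. c e \<otimes> e)"
    using h by (auto simp: ps_carrier_iff span_def)
  then obtain c where c: "\<And>m. c m \<in> E \<rightarrow> S" "\<And>m. h m = (\<Oplus>e\<in>E. c m e \<otimes> e)"
    using choice[of "\<lambda>m c. c \<in> E \<rightarrow> S \<and> h m = (\<Oplus>e\<in>E. c e \<otimes> e)"] by blast
  define a where "a e = (\<lambda>m. c m e)" for e
  have aS: "a \<in> E \<rightarrow> ps_carrier S"
    using c(1) by (auto simp: a_def ps_carrier_iff Pi_iff)
  have aC: "a e \<in> carrier (ps_ring R)" if "e \<in> E" for e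
  proof -
    have "a e \<in> ps_carrier S" using aS that by blast
    then show ?thesis using subringE(1)[OF S] by (auto simp: ps_ring_simps ps_carrier_iff)
  qed
  have "(\<Oplus>\<^bsub>ps_ring R\<^esub>e\<in>E. a e \<otimes>\<^bsub>ps_ring R\<^esub> ps_const R e) =
      (\<Oplus>\<^bsub>ps_ring R\<^esub>e\<in>E. (\<lambda>m. a e m \<otimes> e))"
    using aC E(2)
    by (intro P.finsum_cong') (auto simp: ps_mult_const subsetD ps_ring_simps(1) ps_carrier_iff)
  also have "\<dots> = (\<lambda>m. \<Oplus>e\<in>E. a e m \<otimes> e)"
    using aC E by (intro finsum_ps_ring) (auto simp: ps_ring_simps ps_carrier_iff)
  also have "\<dots> = h"
    using c(2) by (simp add: a_def fun_eq_iff)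
  finally show ?thesis
    using aS by metis
qed

lemma (in cring) ps_integral_over_if_module_finite:
  fixes f :: "('n::finite \<Rightarrow> nat) \<Rightarrow> 'a"
  assumes S: "subring S R" and T: "subring T R" and fin: "module_finite R S T"
    and f: "f \<in> ps_carrier T"
  shows "integral_over (ps_ring R) (ps_carrier S) f"
proof -
  obtain E where E: "finite E" "E \<subseteq> T" "T \<subseteq> span R S E"
    using fin unfolding module_finite_def by blast
  have EC: "E \<subseteq> carrier R"
    using E(2) subringE(1)[OF T] by (rule order_trans)
  have PT: "subring (ps_carrier T) (ps_ring R :: (('n \<Rightarrow> nat) \<Rightarrow> 'a) ring)"
    by (rule subring_ps_carrier[OF T])
  have in_span: "h \<in> ps_carrier (span R S E)" if "h \<in> ps_carrier T" for h
    using that E(3) by (auto simp: ps_carrier_iff)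
  have const_T: "ps_const R e \<in> ps_carrier T" if "e \<in> E" for e
    using that E(2) subringE(2)[OF T] by (intro ps_const_in_ps_carrier) auto
  have carrier_T: "ps_carrier T \<subseteq> carrier (ps_ring R :: (('n \<Rightarrow> nat) \<Rightarrow> 'a) ring)"
    using subringE(1)[OF PT] .
  have P: "adjunction (ps_ring R :: (('n \<Rightarrow> nat) \<Rightarrow> 'a) ring) (ps_carrier S) f"
    by (intro adjunction.intro adjunction_axioms.intro cring_ps_ring subring_ps_carrier[OF S])
      (use f carrier_T in blast)
  obtain u :: "'a \<Rightarrow> ('n \<Rightarrow> nat) \<Rightarrow> 'a" where u: "u \<in> E \<rightarrow> ps_carrier S"
    and one: "\<one>\<^bsub>ps_ring R\<^esub> = (\<Oplus>\<^bsub>ps_ring R\<^esub>e\<in>E. u e \<otimes>\<^bsub>ps_ring R\<^esub> ps_const R e)"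
    using ps_in_span_of_consts[OF S E(1) EC in_span[OF subringE(3)[OF PT]]] by blast
  show ?thesis
  proof (rule adjunction.determinant_trick[OF P E(1) _ _ _ one])
    show "ps_const R \<in> E \<rightarrow> carrier (ps_ring R :: (('n \<Rightarrow> nat) \<Rightarrow> 'a) ring)"
      using const_T carrier_T by blast
    show "u \<in> E \<rightarrow> carrier (ps_ring R)"
      using u subringE(1)[OF subring_ps_carrier[OF S]] by blast
  next
    fix e assume "e \<in> E"
    then have "f \<otimes>\<^bsub>ps_ring R\<^esub> ps_const R e \<in> ps_carrier T"
      using subringE(6)[OF PT f const_T] by blast
    then show "\<exists>a\<in>E \<rightarrow> ps_carrier S. f \<otimes>\<^bsub>ps_ring R\<^esub> ps_const R e =
        (\<Oplus>\<^bsub>ps_ring R\<^esub>j\<in>E. a j \<otimes>\<^bsub>ps_ring R\<^esub> ps_const R j)"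
      by (rule ps_in_span_of_consts[OF S E(1) EC in_span])
  qed
qed

theorem proposition6p4:
  fixes R :: "('a, 'b) ring_scheme" and R0 Ra :: "'a set"
    and f :: "('n::finite \<Rightarrow> nat) \<Rightarrow> 'a"
  assumes "cring R"
    and "krull_dim_zero R"
    and "subring R0 R"
    and "artinian_ring (R\<lparr>carrier := R0\<rparr>)"
    and "\<forall>x\<in>carrier R. integral_over R R0 x"
    and "Ra \<in> fg_family R R0"
    and "f \<in> artinian_ps R R0"
  shows "integral_over (ps_ring R) (ps_carrier Ra) f"
proof -
  interpret cring R by fact
  have R0C: "R0 \<subseteq> carrier R" using subringE(1)[OF assms(3)] .
  obtain A where A: "finite A" "A \<subseteq> carrier R" "Ra = generate_ring R (R0 \<union> A)"
    using assms(6) unfolding fg_family_def by blast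
  obtain B where B: "finite B" "B \<subseteq> carrier R" "f \<in> ps_carrier (generate_ring R (R0 \<union> B))"
    using assms(7) unfolding artinian_ps_def fg_family_def by blast
  have Ra: "subring Ra R" "R0 \<subseteq> Ra"
    unfolding A(3) using R0C A(2) by (auto intro: generate_ring_is_subring generate_ring.incl)
  let ?T = "generate_ring R (Ra \<union> B)"
  have RaB: "Ra \<union> B \<subseteq> carrier R"
    using subringE(1)[OF Ra(1)] B(2) by blast
  have T: "subring ?T R"
    by (rule generate_ring_is_subring[OF RaB])
  have "\<forall>b\<in>B. integral_over R Ra b"
    using assms(5) B(2) integral_over_mono[OF Ra(2)] by blast
  then have fin: "module_finite R Ra ?T"
    by (rule module_finite_generate_ring[OF Ra(1) B(1,2)])
  have "generate_ring R (R0 \<union> B) \<subseteq> ?T"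
    by (rule mono_generate_ring) (use Ra(2) RaB in auto)
  then have "f \<in> ps_carrier ?T"
    using B(3) unfolding ps_carrier_def by blast
  then show ?thesis
    by (rule ps_integral_over_if_module_finite[OF Ra(1) T fin])
qed

end
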